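(* Let $(a_k)_{k\geqslant1}$ be a sequence of complex numbers and $S(x)=\sum_{k\leqslant x}a_k\left[\frac{x}{k}\right]\log k$. Suppose that for every $v>1$, $\lim_{k\to\infty}|S(k)|/k^{v}=0$, so that $g(s)=\sum_{m=1}^\infty a_m m^{-s}$ converges for all real $s>1$. Then for every integer $n\geqslant 2$, with $\sigma=1+\frac{1}{\log n}$, \[ \sum_{m=1}^n a_m\left[\frac{n}{m}\right]-n\,g\Bigl(1+\frac{1}{\log n}\Bigr)-\frac{S(n)}{\log n} =\sum_{k=2}^{n-1}S(k)\int_0^\infty\Bigl(\frac{F_t(\frac{n}{k})}{k^t}-\frac{F_t(\frac{n}{k+1})}{(k+1)^t}\Bigr)dt - n\sum_{k=2}^\infty S(k)\int_\sigma^\infty\Bigl(\frac{1}{k^u}-\frac{1}{(k+1)^u}\Bigr)\frac{du}{\zeta(u)}, \] where an empty sum $\sum_{k=2}^{1}$ is taken to be $0$.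
   Context: $[x]$ denotes the integer part of $x$; $\zeta$ is the Riemann zeta function; $\mu$ is the Möbius function. For $t>0$, $f_t(m)=\sum_{d\mid m}\mu(d)d^{-t}=\prod_{p\mid m}(1-p^{-t})$ (product over primes dividing $m$), and $F_t(x)=\sum_{1\leqslant m\leqslant x}f_t(m)$. *)

theory Defs
  imports "HOL-Analysis.Analysis" "HOL-Computational_Algebra.Computational_Algebra"
begin

definition mobius :: "nat \<Rightarrow> real" where
  "mobius d = (if d = 0 then 0 else if squarefree d then (-1) ^ card (prime_factors d) else 0)"

(* Riemann zeta function on reals u > 1 (the only range where it is used) *)
definition zeta_real :: "real \<Rightarrow> real" where
  "zeta_real u = (\<Sum>m. 1 / real (m + 1) powr u)"

definition f_t :: "real \<Rightarrow> nat \<Rightarrow> real" where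
  "f_t t m = (\<Sum>d | d dvd m. mobius d * real d powr (- t))"

definition F_t :: "real \<Rightarrow> real \<Rightarrow> real" where
  "F_t t x = (\<Sum>m\<in>{1..nat \<lfloor>x\<rfloor>}. f_t t m)"

(* S(x) = sum_{k <= x} a_k [x/k] log k  (a indexed from 1; a 0 is irrelevant) *)
definition S_fun :: "(nat \<Rightarrow> complex) \<Rightarrow> real \<Rightarrow> complex" where
  "S_fun a x = (\<Sum>k\<in>{1..nat \<lfloor>x\<rfloor>}. a k * of_int \<lfloor>x / real k\<rfloor> * of_real (ln (real k)))"

definition g_fun :: "(nat \<Rightarrow> complex) \<Rightarrow> real \<Rightarrow> complex" where
  "g_fun a s = (\<Sum>m. a (m + 1) * of_real (real (m + 1) powr (- s)))"

end

theory Submission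
  imports Defs
begin

(* Write b j = a j * log j. Since S(m) = Sum_{j <= m} b j [m/j], Moebius inversion gives
   Sum_{j <= m} b j = Sum_{d <= m} mu(d) S([m/d]). For a weight phi on the integers, summation by
   parts followed by the substitution m = d k + r (0 <= r < d) turns Sum_j b j phi(j) into
   Sum_k S(k) Sum_d mu(d) (phi(d k) - phi(d k + d)), as long as the triple series over (k, d, r)
   converges absolutely and the boundary terms of the summation by parts vanish.

   For phi(x) = [n/x] / log x every sum is finite, and Sum_d mu(d) phi(d k) is the integral of
   F_t(n/k) k^-t over t >= 0. For phi(x) = x^-sigma / log x the growth hypothesis on S gives
   absolute convergence, and Sum_d mu(d) (phi(d k) - phi(d k + d)) is the integral of
   (k^-u - (k+1)^-u) / zeta(u) over u >= sigma, because Sum_d mu(d) d^-u = 1 / zeta(u).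
   In both cases the term j = 1, invisible to S since log 1 = 0, is split off: it contributes
   n a 1 and a 1 respectively, and these cancel in the final identity. *)

section \<open>Moebius function and divisor sums\<close>

lemma abs_mobius_le: "\<bar>mobius d\<bar> \<le> 1"
  by (simp add: mobius_def)

lemma mobius_prime_times:
  assumes p: "prime p" and "d > 0" and "\<not> p dvd d"
  shows "mobius (p * d) = - mobius d"
proof -
  have "coprime p d"
    using assms by (simp add: prime_imp_coprime)
  then have "squarefree (p * d) \<longleftrightarrow> squarefree d"
    using squarefree_mult_coprime squarefree_prime[OF p] squarefree_multD(2) by blast
  moreover have "prime_factors (p * d) = insert p (prime_factors d)" "p \<notin> prime_factors d"
    using assms by (auto simp: prime_factors_product prime_prime_factors)
  ultimately show ?thesis
    using assms by (auto simp: mobius_def prime_gt_0_nat)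
qed

lemma mobius_prime_times_dvd:
  assumes "prime p" and "p dvd d"
  shows "mobius (p * d) = 0"
proof -
  have "p ^ 2 dvd p * d"
    using assms(2) by (simp add: power2_eq_square)
  then have "\<not> squarefree (p * d)"
    using assms(1) by (auto simp: squarefree_def)
  then show ?thesis
    by (simp add: mobius_def)
qed

lemma sum_mobius_prime_times:
  assumes p: "prime p" and "q > 0"
  shows "(\<Sum>e | e dvd q. mobius (p * e)) = - (\<Sum>e | e dvd q \<and> \<not> p dvd e. mobius e)"
proof -
  have "(\<Sum>e | e dvd q. mobius (p * e)) = (\<Sum>e | e dvd q. if \<not> p dvd e then - mobius e else 0)"
    using \<open>q > 0\<close> by (intro sum.cong refl)
      (auto simp: mobius_prime_times_dvd[OF p] intro!: mobius_prime_times[OF p] Nat.gr0I)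
  also have "\<dots> = (\<Sum>e | e dvd q \<and> \<not> p dvd e. - mobius e)"
    using \<open>q > 0\<close> by (subst sum.inter_filter[symmetric]) simp_all
  finally show ?thesis
    by (simp add: sum_negf)
qed

lemma sum_mobius_divisors:
  assumes "N > 0"
  shows "(\<Sum>d | d dvd N. mobius d) = (if N = 1 then 1 else 0)"
proof (cases "N = 1")
  case False
  then obtain p where p: "prime p" "p dvd N"
    using prime_factor_nat by blast
  then obtain q where N: "N = p * q"
    by (auto elim: dvdE)
  with assms have "q > 0"
    by simp
  have coprime_part: "{d. d dvd N \<and> \<not> p dvd d} = {e. e dvd q \<and> \<not> p dvd e}"
    using p(1) by (auto simp: N)
      (metis coprime_commute coprime_dvd_mult_right_iff prime_imp_coprime)
  have multiple_part: "{d. d dvd N \<and> p dvd d} = (\<lambda>e. p * e) ` {e. e dvd q}"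
    using prime_gt_0_nat[OF p(1)] by (auto simp: N elim!: dvdE)
  have "(\<Sum>d | d dvd N. mobius d)
      = (\<Sum>d | d dvd N \<and> \<not> p dvd d. mobius d) + (\<Sum>d | d dvd N \<and> p dvd d. mobius d)"
    using assms by (subst sum.union_disjoint[symmetric]) (auto intro!: sum.cong)
  also have "(\<Sum>d | d dvd N \<and> p dvd d. mobius d) = (\<Sum>e | e dvd q. mobius (p * e))"
    unfolding multiple_part using prime_gt_0_nat[OF p(1)] by (simp add: sum.reindex inj_on_def)
  finally show ?thesis
    using False by (simp only: coprime_part sum_mobius_prime_times[OF p(1) \<open>q > 0\<close>]) simp
qed (simp add: mobius_def)

lemma sum_divisors_eq_sum_times_div:
  fixes g :: "nat \<Rightarrow> 'a::comm_semiring_1"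
  shows "(\<Sum>m\<in>{1..X}. \<Sum>d | d dvd m. g d) = (\<Sum>d\<in>{1..X}. g d * of_nat (X div d))"
proof (induction X)
  case (Suc X)
  have Suc_div: "Suc X div d = X div d + (if d dvd Suc X then 1 else 0)" if "d > 0" for d
    using that by (auto simp: div_Suc dvd_eq_mod_eq_0)
  have divisors: "{d \<in> {1..Suc X}. d dvd Suc X} = {d. d dvd Suc X}"
    by (auto intro: dvd_imp_le simp: Suc_le_eq) (metis dvd_0_left_iff nat.distinct(1) gr0I)
  have "(\<Sum>d\<in>{1..Suc X}. g d * of_nat (Suc X div d))
      = (\<Sum>d\<in>{1..Suc X}. g d * of_nat (X div d)) + (\<Sum>d\<in>{1..Suc X}. if d dvd Suc X then g d else 0)"
    by (simp only: sum.distrib[symmetric], intro sum.cong refl) (auto simp: Suc_div distrib_left)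
  also have "(\<Sum>d\<in>{1..Suc X}. if d dvd Suc X then g d else 0) = (\<Sum>d | d dvd Suc X. g d)"
    by (simp only: divisors flip: sum.inter_filter[OF finite_atLeastAtMost])
  finally show ?case
    using Suc by (simp add: sum.cl_ivl_Suc)
qed simp

lemma sum_times_div_mono_neutral:
  fixes g :: "nat \<Rightarrow> 'a::comm_semiring_1"
  assumes "X \<le> N"
  shows "(\<Sum>d\<in>{1..X}. g d * of_nat (X div d)) = (\<Sum>d\<in>{1..N}. g d * of_nat (X div d))"
  using assms by (intro sum.mono_neutral_left) auto

lemma sum_mobius_times_div:
  assumes "1 \<le> X" and "X \<le> N"
  shows "(\<Sum>d\<in>{1..N}. of_real (mobius d) * of_nat (X div d)) = (1 :: 'a::real_algebra_1)"
proof -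
  have "(\<Sum>d\<in>{1..N}. of_real (mobius d) * (of_nat (X div d) :: 'a))
      = of_real (\<Sum>d\<in>{1..N}. mobius d * of_nat (X div d))"
    by simp
  also have "(\<Sum>d\<in>{1..N}. mobius d * of_nat (X div d)) = (\<Sum>m\<in>{1..X}. \<Sum>d | d dvd m. mobius d)"
    by (simp only: sum_divisors_eq_sum_times_div sum_times_div_mono_neutral[OF assms(2)])
  also have "\<dots> = 1"
    using assms(1) by (simp add: sum_mobius_divisors)
  finally show ?thesis
    by simp
qed

lemma mobius_inversion_sum_times_div:
  fixes b :: "nat \<Rightarrow> 'a::{comm_ring_1, real_algebra_1}"
  shows "(\<Sum>d\<in>{1..m}. of_real (mobius d) * (\<Sum>j\<in>{1..m div d}. b j * of_nat (m div d div j)))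
       = (\<Sum>j\<in>{1..m}. b j)"
proof -
  have extend: "(\<Sum>j\<in>{1..m div d}. b j * of_nat (m div d div j)) = (\<Sum>j\<in>{1..m}. b j * of_nat (m div d div j))"
    for d by (rule sum_times_div_mono_neutral) simp
  have "(\<Sum>d\<in>{1..m}. of_real (mobius d) * (\<Sum>j\<in>{1..m div d}. b j * of_nat (m div d div j)))
      = (\<Sum>d\<in>{1..m}. \<Sum>j\<in>{1..m}. b j * (of_real (mobius d) * of_nat (m div j div d)))"
    unfolding extend by (simp add: sum_distrib_left mult_ac flip: div_mult2_eq)
  also have "\<dots> = (\<Sum>j\<in>{1..m}. b j * (\<Sum>d\<in>{1..m}. of_real (mobius d) * of_nat (m div j div d)))"
    by (subst sum.swap) (simp add: sum_distrib_left)
  also have "\<dots> = (\<Sum>j\<in>{1..m}. b j)"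
  proof (intro sum.cong refl)
    fix j assume "j \<in> {1..m}"
    then have j: "1 \<le> m div j"
      by (simp add: div_greater_zero_iff Suc_le_eq)
    show "b j * (\<Sum>d\<in>{1..m}. of_real (mobius d) * of_nat (m div j div d)) = b j"
      by (simp only: sum_mobius_times_div[OF j div_le_dividend] mult_1_right)
  qed
  finally show ?thesis .
qed

lemma S_fun_of_nat:
  "S_fun a (real k) = (\<Sum>j\<in>{1..k}. a j * of_real (ln (real j)) * of_nat (k div j))"
  unfolding S_fun_def by (intro sum.cong) (auto simp: floor_divide_of_nat_eq)

lemma S_fun_one [simp]: "S_fun a 1 = 0"
  using S_fun_of_nat[of a 1] by simp

lemma sum_mobius_S_fun:
  "(\<Sum>d\<in>{1..m}. of_real (mobius d) * S_fun a (real (m div d))) = (\<Sum>j\<in>{1..m}. a j * of_real (ln (real j)))"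
  unfolding S_fun_of_nat by (rule mobius_inversion_sum_times_div)

lemma summation_by_parts:
  fixes b :: "nat \<Rightarrow> 'a::real_algebra_1" and \<phi> :: "nat \<Rightarrow> real"
  shows "(\<Sum>m\<in>{1..N}. b m * of_real (\<phi> m))
       = (\<Sum>m\<in>{1..N}. (\<Sum>j\<in>{1..m}. b j) * of_real (\<phi> m - \<phi> (m + 1)))
         + (\<Sum>j\<in>{1..N}. b j) * of_real (\<phi> (N + 1))"
  by (induction N) (simp_all add: algebra_simps)

section \<open>Regrouping the triple series\<close>

lemma has_sum_atLeast1_iff:
  "(f has_sum s) {1::nat..} \<longleftrightarrow> ((\<lambda>n. f (Suc n)) has_sum s) UNIV"
proof -
  have "{1::nat..} = range Suc"
    by (auto simp: Suc_le_eq gr0_conv_Suc)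
  then show ?thesis
    by (simp add: has_sum_reindex o_def)
qed

lemma has_sum_atLeast1_imp_sums:
  fixes f :: "nat \<Rightarrow> 'a::{topological_comm_monoid_add, t2_space}"
  assumes "(f has_sum s) {1..}"
  shows "(\<lambda>n. f (Suc n)) sums s"
  using assms unfolding has_sum_atLeast1_iff by (rule has_sum_imp_sums)

lemma has_sum_atLeast1_imp_tendsto:
  fixes f :: "nat \<Rightarrow> 'a::{topological_comm_monoid_add, t2_space}"
  assumes "(f has_sum s) {1..}"
  shows "(\<lambda>N. \<Sum>n\<in>{1..N}. f n) \<longlonglongrightarrow> s"
  using has_sum_atLeast1_imp_sums[OF assms] by (simp add: sums_def sum.atLeast1_atMost_eq)

lemma has_sum_reindex_divmod:
  fixes h :: "nat \<times> nat \<Rightarrow> 'a::topological_comm_monoid_add"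
  shows "((\<lambda>(k, d, r). h (d * k + r, d)) has_sum s) (Sigma {1..} (\<lambda>k. Sigma {1..} (\<lambda>d. {..<d})))
     \<longleftrightarrow> (h has_sum s) (Sigma {1..} (\<lambda>m. {1..m}))"
proof (rule has_sum_reindex_bij_witness[where i = "\<lambda>(m::nat, d). (m div d, d, m mod d)"
      and j = "\<lambda>(k::nat, d::nat, r). (d * k + r, d)"])
  fix x :: "nat \<times> nat \<times> nat" assume "x \<in> Sigma {1..} (\<lambda>k. Sigma {1..} (\<lambda>d. {..<d}))"
  then obtain k d r where x: "x = (k, d, r)" "1 \<le> k" "1 \<le> d" "r < d"
    by auto
  then have "d \<le> d * k + r"
    by (simp add: trans_le_add1)
  with x show "(case (case x of (k, d, r) \<Rightarrow> (d * k + r, d)) of (m, d) \<Rightarrow> (m div d, d, m mod d)) = x"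
    and "(case x of (k, d, r) \<Rightarrow> (d * k + r, d)) \<in> Sigma {1..} (\<lambda>m. {1..m})"
    by simp_all
next
  fix y :: "nat \<times> nat" assume "y \<in> Sigma {1..} (\<lambda>m. {1..m})"
  then obtain m d where y: "y = (m, d)" "1 \<le> d" "d \<le> m"
    by auto
  then have "1 \<le> m div d"
    by (simp add: div_greater_zero_iff Suc_le_eq)
  with y show "(case (case y of (m, d) \<Rightarrow> (m div d, d, m mod d)) of (k, d, r) \<Rightarrow> (d * k + r, d)) = y"
    and "(case y of (m, d) \<Rightarrow> (m div d, d, m mod d)) \<in> Sigma {1..} (\<lambda>k. Sigma {1..} (\<lambda>d. {..<d}))"
    by simp_all
qed (simp_all add: case_prod_unfold)

lemma has_sum_reindex_divisors:
  fixes h :: "nat \<times> nat \<Rightarrow> 'a::topological_comm_monoid_add"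
  shows "((\<lambda>(d, m). h (d * m, d)) has_sum s) (Sigma {1..} (\<lambda>_. {1..}))
     \<longleftrightarrow> (h has_sum s) (Sigma {1..} (\<lambda>N. {d. d dvd N}))"
proof (rule has_sum_reindex_bij_witness[where i = "\<lambda>(N::nat, d). (d, N div d)" and j = "\<lambda>(d::nat, m). (d * m, d)"])
  fix x :: "nat \<times> nat" assume "x \<in> Sigma {1..} (\<lambda>_. {1..})"
  then obtain d m where x: "x = (d, m)" "1 \<le> d" "1 \<le> m"
    by auto
  then have "1 \<le> d * m"
    by simp
  with x show "(case (case x of (d, m) \<Rightarrow> (d * m, d)) of (N, d) \<Rightarrow> (d, N div d)) = x"
    and "(case x of (d, m) \<Rightarrow> (d * m, d)) \<in> Sigma {1..} (\<lambda>N. {d. d dvd N})"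
    by simp_all
next
  fix y :: "nat \<times> nat" assume "y \<in> Sigma {1..} (\<lambda>N. {d. d dvd N})"
  then obtain N d where y: "y = (N, d)" "1 \<le> N" "d dvd N"
    by auto
  then have "1 \<le> N div d"
    by (metis One_nat_def Suc_le_eq div_greater_zero_iff dvd_imp_le dvd_pos_nat)
  with y show "(case (case y of (N, d) \<Rightarrow> (d, N div d)) of (d, m) \<Rightarrow> (d * m, d)) = y"
    and "(case y of (N, d) \<Rightarrow> (d, N div d)) \<in> Sigma {1..} (\<lambda>_. {1..})"
    by (auto intro: Nat.gr0I)
qed (simp_all add: case_prod_unfold)

definition mobius_triple :: "(nat \<Rightarrow> complex) \<Rightarrow> (nat \<Rightarrow> real) \<Rightarrow> nat \<times> nat \<times> nat \<Rightarrow> complex" where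
  "mobius_triple s \<phi> = (\<lambda>(k, d, r). of_real (mobius d) * s k * of_real (\<phi> (d * k + r) - \<phi> (d * k + r + 1)))"

lemma has_sum_mobius_triple_by_m:
  assumes "(mobius_triple s \<phi> has_sum L) (Sigma {1..} (\<lambda>k. Sigma {1..} (\<lambda>d. {..<d})))"
  shows "((\<lambda>m. (\<Sum>d\<in>{1..m}. of_real (mobius d) * s (m div d)) * of_real (\<phi> m - \<phi> (m + 1))) has_sum L) {1..}"
proof -
  have "((\<lambda>(m, d). of_real (mobius d) * s (m div d) * of_real (\<phi> m - \<phi> (m + 1))) has_sum L)
      (Sigma {1..} (\<lambda>m. {1..m}))"
    using assms unfolding has_sum_reindex_divmod[symmetric]
    by (rule has_sum_cong[THEN iffD1, rotated]) (auto simp: mobius_triple_def add.commute)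
  then show ?thesis
    by (rule has_sum_Sigma') (auto intro!: has_sum_finiteI simp: sum_distrib_right)
qed

lemma has_sum_mobius_triple_slice:
  "((\<lambda>r. mobius_triple s \<phi> (k, d, r)) has_sum of_real (mobius d) * s k * of_real (\<phi> (d * k) - \<phi> (d * k + d))) {..<d}"
proof (rule has_sum_finiteI)
  have "(\<Sum>r<d. \<phi> (d * k + r) - \<phi> (d * k + r + 1)) = \<phi> (d * k) - \<phi> (d * k + d)"
    using sum_lessThan_telescope'[of "\<lambda>r. \<phi> (d * k + r)" d] by simp
  then show "of_real (mobius d) * s k * of_real (\<phi> (d * k) - \<phi> (d * k + d)) = (\<Sum>r<d. mobius_triple s \<phi> (k, d, r))"
    unfolding mobius_triple_def by (simp only: case_prod_conv sum_distrib_left[symmetric] of_real_sum[symmetric])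
qed simp

lemma has_sum_mobius_triple_by_k:
  assumes "(mobius_triple s \<phi> has_sum L) (Sigma {1..} (\<lambda>k. Sigma {1..} (\<lambda>d. {..<d})))"
  shows "((\<lambda>k. \<Sum>\<^sub>\<infinity>d\<in>{1..}. of_real (mobius d) * s k * of_real (\<phi> (d * k) - \<phi> (d * k + d))) has_sum L) {1..}"
    and "1 \<le> k \<Longrightarrow> (\<lambda>d. of_real (mobius d) * s k * of_real (\<phi> (d * k) - \<phi> (d * k + d))) summable_on {1..}"
proof -
  define D where "D = Sigma {1::nat..} (\<lambda>d. {..<d})"
  define T where "T = mobius_triple s \<phi>"
  have T_sum: "(T has_sum L) (Sigma {1..} (\<lambda>_. D))"
    using assms by (simp add: T_def D_def)
  then have "T summable_on Sigma {1..} (\<lambda>_. D)"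
    by (auto simp: summable_on_def)
  then have slice: "((\<lambda>x. T (k, x)) has_sum infsum (\<lambda>x. T (k, x)) D) D" if "k \<in> {1..}" for k
    using summable_on_SigmaD1[of "\<lambda>k x. T (k, x)" "{1..}" "\<lambda>_. D" k] that by (simp add: has_sum_infsum)
  have inner: "((\<lambda>d. of_real (mobius d) * s k * of_real (\<phi> (d * k) - \<phi> (d * k + d)))
      has_sum infsum (\<lambda>x. T (k, x)) D) {1..}" if "k \<in> {1..}" for k
    using has_sum_Sigma'[OF slice[OF that, unfolded D_def] has_sum_mobius_triple_slice[of s \<phi> k, folded T_def]]
    by (simp only: D_def)
  then show "1 \<le> k \<Longrightarrow> (\<lambda>d. of_real (mobius d) * s k * of_real (\<phi> (d * k) - \<phi> (d * k + d))) summable_on {1..}"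
    by (auto simp: summable_on_def)
  have "((\<lambda>x. T (k, x)) has_sum (\<Sum>\<^sub>\<infinity>d\<in>{1..}. of_real (mobius d) * s k * of_real (\<phi> (d * k) - \<phi> (d * k + d)))) D"
    if "k \<in> {1..}" for k
    using slice[OF that] unfolding infsumI[OF inner[OF that]] .
  with T_sum show "((\<lambda>k. \<Sum>\<^sub>\<infinity>d\<in>{1..}. of_real (mobius d) * s k * of_real (\<phi> (d * k) - \<phi> (d * k + d))) has_sum L) {1..}"
    by (rule has_sum_Sigma')
qed

lemma tendsto_weighted_sum_S_fun:
  fixes \<phi> :: "nat \<Rightarrow> real"
  assumes "(\<lambda>x. norm (mobius_triple (\<lambda>k. S_fun a (real k)) \<phi> x)) summable_on Sigma {1..} (\<lambda>k. Sigma {1..} (\<lambda>d. {..<d}))"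
    and boundary: "(\<lambda>M. (\<Sum>j\<in>{1..M}. a j * of_real (ln (real j))) * of_real (\<phi> (M + 1))) \<longlonglongrightarrow> 0"
  obtains L where
    "(\<lambda>M. \<Sum>j\<in>{1..M}. a j * of_real (ln (real j) * \<phi> j)) \<longlonglongrightarrow> L"
    "((\<lambda>k. \<Sum>\<^sub>\<infinity>d\<in>{1..}. of_real (mobius d) * S_fun a (real k) * of_real (\<phi> (d * k) - \<phi> (d * k + d))) has_sum L) {1..}"
    "\<And>k. 1 \<le> k \<Longrightarrow> (\<lambda>d. of_real (mobius d) * S_fun a (real k) * of_real (\<phi> (d * k) - \<phi> (d * k + d))) summable_on {1..}"
proof -
  define L where "L = infsum (mobius_triple (\<lambda>k. S_fun a (real k)) \<phi>) (Sigma {1..} (\<lambda>k. Sigma {1..} (\<lambda>d. {..<d})))"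
  have triple: "(mobius_triple (\<lambda>k. S_fun a (real k)) \<phi> has_sum L) (Sigma {1..} (\<lambda>k. Sigma {1..} (\<lambda>d. {..<d})))"
    unfolding L_def by (rule has_sum_infsum[OF abs_summable_summable[OF assms(1)]])
  define B where "B M = (\<Sum>j\<in>{1..M}. a j * of_real (ln (real j)))" for M
  have "(\<lambda>M. \<Sum>m\<in>{1..M}. B m * of_real (\<phi> m - \<phi> (m + 1))) \<longlonglongrightarrow> L"
    using has_sum_atLeast1_imp_tendsto[OF has_sum_mobius_triple_by_m[OF triple]] by (simp only: B_def sum_mobius_S_fun)
  then have "(\<lambda>M. (\<Sum>m\<in>{1..M}. B m * of_real (\<phi> m - \<phi> (m + 1))) + B M * of_real (\<phi> (M + 1))) \<longlonglongrightarrow> L + 0"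
    using boundary unfolding B_def by (rule tendsto_add)
  moreover have "(\<Sum>j\<in>{1..M}. a j * of_real (ln (real j) * \<phi> j))
      = (\<Sum>m\<in>{1..M}. B m * of_real (\<phi> m - \<phi> (m + 1))) + B M * of_real (\<phi> (M + 1))" for M
    using summation_by_parts[of "\<lambda>j. a j * of_real (ln (real j))" \<phi> M] by (simp add: B_def mult.assoc)
  ultimately show thesis
    using that has_sum_mobius_triple_by_k[OF triple] by simp
qed

section \<open>The weight [n/x] / log x\<close>

(* This weight, like dirichlet_weight below, vanishes at x = 1: ln 1 = 0 and x / 0 = 0. *)
definition floor_weight :: "nat \<Rightarrow> nat \<Rightarrow> real" where
  "floor_weight n x = real (n div x) / ln (real x)"

definition mobius_floor_weight :: "nat \<Rightarrow> nat \<Rightarrow> real" where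
  "mobius_floor_weight n k = (\<Sum>d\<in>{1..n}. mobius d * floor_weight n (d * k))"

lemma floor_weight_eq_0: "n < x \<Longrightarrow> floor_weight n x = 0"
  by (simp add: floor_weight_def)

lemma mobius_floor_weight_eq_0: "n < k \<Longrightarrow> mobius_floor_weight n k = 0"
  unfolding mobius_floor_weight_def
  by (intro sum.neutral ballI) (auto intro!: floor_weight_eq_0 simp: less_le_trans[of n k])

lemma mobius_floor_weight_self:
  assumes "2 \<le> n"
  shows "mobius_floor_weight n n = 1 / ln (real n)"
proof -
  have "(\<Sum>d\<in>{2..n}. mobius d * floor_weight n (d * n)) = 0"
    using assms by (intro sum.neutral ballI) (simp add: floor_weight_eq_0)
  moreover have "mobius_floor_weight n n = mobius 1 * floor_weight n (1 * n) + (\<Sum>d\<in>{2..n}. mobius d * floor_weight n (d * n))"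
    unfolding mobius_floor_weight_def using assms by (subst sum.atLeast_Suc_atMost) (auto simp: numeral_2_eq_2)
  ultimately show ?thesis
    using assms by (simp add: floor_weight_def mobius_def)
qed

lemma has_integral_powr_neg:
  fixes c s :: real
  assumes "1 < c"
  shows "((\<lambda>u. c powr (-u)) has_integral (c powr (-s) / ln c)) {s..}"
proof -
  have "((\<lambda>u. exp (- ln c * u)) has_integral exp (- ln c * s) / ln c) {s..}"
    using assms by (intro has_integral_exp_minus_to_infinity) simp
  then show ?thesis
    using assms by (simp add: powr_def mult.commute)
qed

lemma F_t_div_powr_eq_sum:
  "F_t t (real n / real k) / real k powr t
     = (\<Sum>d\<in>{1..n}. mobius d * real (n div (d * k)) * real (d * k) powr (-t))"
proof -
  have "F_t t (real n / real k) = (\<Sum>m\<in>{1..n div k}. \<Sum>d | d dvd m. mobius d * real d powr (-t))"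
    by (simp add: F_t_def f_t_def floor_divide_of_nat_eq)
  also have "\<dots> = (\<Sum>d\<in>{1..n}. mobius d * real d powr (-t) * real (n div k div d))"
    by (simp only: sum_divisors_eq_sum_times_div sum_times_div_mono_neutral[OF div_le_dividend])
  finally show ?thesis
    by (simp add: sum_divide_distrib powr_mult powr_minus_divide mult_ac flip: div_mult2_eq)
qed

lemma has_integral_F_t_div_powr:
  assumes "2 \<le> k"
  shows "((\<lambda>t. F_t t (real n / real k) / real k powr t) has_integral mobius_floor_weight n k) {0..}"
proof -
  have "((\<lambda>t. \<Sum>d\<in>{1..n}. mobius d * real (n div (d * k)) * real (d * k) powr (-t)) has_integral
      (\<Sum>d\<in>{1..n}. mobius d * real (n div (d * k)) * (real (d * k) powr (-0) / ln (real (d * k))))) {0..}"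
  proof (intro has_integral_sum has_integral_mult_right has_integral_powr_neg)
    fix d assume "d \<in> {1..n}"
    then have "1 * 2 \<le> d * k"
      using assms by (intro mult_le_mono) auto
    then show "1 < real (d * k)"
      by linarith
  qed simp
  then show ?thesis
    using assms by (simp add: F_t_div_powr_eq_sum mobius_floor_weight_def floor_weight_def)
qed

lemma summable_on_floor_weight_triple:
  "(\<lambda>x. norm (mobius_triple c (floor_weight n) x)) summable_on Sigma {1..} (\<lambda>k. Sigma {1..} (\<lambda>d. {..<d}))"
proof -
  have "norm (mobius_triple c (floor_weight n) (k, d, r)) = 0"
    if "1 \<le> k" "1 \<le> d" "r < d" "\<not> (k \<le> n \<and> d \<le> n \<and> r < n)" for k d r
  proof -
    have "k \<le> d * k" "d \<le> d * k"
      using that by simp_all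
    then have "n < d * k + r"
      using that by linarith
    then show ?thesis
      by (simp add: mobius_triple_def floor_weight_eq_0)
  qed
  then have "{x \<in> Sigma {1..} (\<lambda>k. Sigma {1..} (\<lambda>d. {..<d})). norm (mobius_triple c (floor_weight n) x) \<noteq> 0}
      \<subseteq> {1..n} \<times> {1..n} \<times> {..<n}"
    by force
  then have "finite {x \<in> Sigma {1..} (\<lambda>k. Sigma {1..} (\<lambda>d. {..<d})). norm (mobius_triple c (floor_weight n) x) \<noteq> 0}"
    by (rule finite_subset) simp
  then show ?thesis
    by (rule finite_nonzero_values_imp_summable_on)
qed

lemma infsum_mobius_floor_weight_diff:
  fixes c :: complex
  assumes "1 \<le> k"
  shows "(\<Sum>\<^sub>\<infinity>d\<in>{1..}. of_real (mobius d) * c * of_real (floor_weight n (d * k) - floor_weight n (d * k + d)))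
       = c * of_real (mobius_floor_weight n k - mobius_floor_weight n (k + 1))"
proof -
  have "(\<Sum>\<^sub>\<infinity>d\<in>{1..}. of_real (mobius d) * c * of_real (floor_weight n (d * k) - floor_weight n (d * k + d)))
      = (\<Sum>d\<in>{1..n}. of_real (mobius d) * c * of_real (floor_weight n (d * k) - floor_weight n (d * k + d)))"
  proof (rule infsumI, rule has_sum_finite_neutralI)
    fix d assume "d \<in> {1..} - {1..n}"
    then have "n < d * k" "n < d * k + d"
      using assms by (auto intro: less_le_trans[of n d])
    then show "of_real (mobius d) * c * of_real (floor_weight n (d * k) - floor_weight n (d * k + d)) = 0"
      by (simp add: floor_weight_eq_0)
  qed auto
  also have "\<dots> = c * of_real (mobius_floor_weight n k - mobius_floor_weight n (k + 1))"
    by (simp add: mobius_floor_weight_def sum_distrib_left algebra_simps flip: sum_subtractf)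
  finally show ?thesis .
qed

lemma sum_times_div_eq_floor_weight:
  assumes "1 \<le> n"
  shows "(\<Sum>m\<in>{1..n}. a m * of_nat (n div m))
       = a 1 * of_nat n + (\<Sum>j\<in>{1..n}. a j * of_real (ln (real j) * floor_weight n j))"
proof -
  have "a j * of_nat (n div j) = a j * of_real (ln (real j) * floor_weight n j) + (if j = 1 then a 1 * of_nat n else 0)"
    if "j \<in> {1..n}" for j
    using that by (cases "j = 1") (simp_all add: floor_weight_def)
  then show ?thesis
    using assms by (simp add: sum.distrib)
qed

lemma sum_times_div_eq_sum_S_fun:
  assumes "2 \<le> n"
  shows "(\<Sum>m\<in>{1..n}. a m * of_nat (n div m))
       = of_nat n * a 1
         + (\<Sum>k\<in>{2..n - 1}. S_fun a (real k) * of_real (mobius_floor_weight n k - mobius_floor_weight n (k + 1)))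
         + S_fun a (real n) / of_real (ln (real n))"
proof -
  have boundary: "(\<lambda>M. (\<Sum>j\<in>{1..M}. a j * of_real (ln (real j))) * of_real (floor_weight n (M + 1))) \<longlonglongrightarrow> 0"
    by (rule tendsto_eventually) (auto simp: eventually_sequentially floor_weight_eq_0 intro!: exI[of _ n])
  obtain L where by_j: "(\<lambda>M. \<Sum>j\<in>{1..M}. a j * of_real (ln (real j) * floor_weight n j)) \<longlonglongrightarrow> L"
    and by_k: "((\<lambda>k. \<Sum>\<^sub>\<infinity>d\<in>{1..}. of_real (mobius d) * S_fun a (real k)
        * of_real (floor_weight n (d * k) - floor_weight n (d * k + d))) has_sum L) {1..}"
    using tendsto_weighted_sum_S_fun[OF summable_on_floor_weight_triple boundary] by blast
  have "(\<lambda>M. \<Sum>j\<in>{1..M}. a j * of_real (ln (real j) * floor_weight n j))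
      \<longlonglongrightarrow> (\<Sum>j\<in>{1..n}. a j * of_real (ln (real j) * floor_weight n j))"
    by (rule tendsto_eventually)
      (auto simp: eventually_sequentially floor_weight_eq_0 intro!: exI[of _ n] sum.mono_neutral_right)
  with by_j have L_by_j: "L = (\<Sum>j\<in>{1..n}. a j * of_real (ln (real j) * floor_weight n j))"
    by (rule LIMSEQ_unique)
  have "((\<lambda>k. S_fun a (real k) * of_real (mobius_floor_weight n k - mobius_floor_weight n (k + 1))) has_sum L) {1..}"
    using by_k by (rule has_sum_cong[THEN iffD1, rotated]) (rule infsum_mobius_floor_weight_diff, simp)
  moreover have "((\<lambda>k. S_fun a (real k) * of_real (mobius_floor_weight n k - mobius_floor_weight n (k + 1))) has_sum
      (\<Sum>k\<in>{1..n}. S_fun a (real k) * of_real (mobius_floor_weight n k - mobius_floor_weight n (k + 1)))) {1..}"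
    by (rule has_sum_finite_neutralI) (auto simp: mobius_floor_weight_eq_0)
  ultimately have L_by_k: "L = (\<Sum>k\<in>{1..n}. S_fun a (real k) * of_real (mobius_floor_weight n k - mobius_floor_weight n (k + 1)))"
    by (rule has_sum_unique)
  have "{1..n} = insert 1 (insert n {2..n - 1})" "1 \<notin> insert n {2..n - 1}" "n \<notin> {2..n - 1}"
    using assms by auto
  then have "L = (\<Sum>k\<in>{2..n - 1}. S_fun a (real k) * of_real (mobius_floor_weight n k - mobius_floor_weight n (k + 1)))
      + S_fun a (real n) / of_real (ln (real n))"
    using assms unfolding L_by_k by (simp add: mobius_floor_weight_self mobius_floor_weight_eq_0 divide_inverse)
  then show ?thesis
    using assms L_by_j sum_times_div_eq_floor_weight[of n a] by simp
qed

section \<open>The weight x powr -\<sigma> / log x\<close>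

definition dirichlet_weight :: "real \<Rightarrow> nat \<Rightarrow> real" where
  "dirichlet_weight \<sigma> x = real x powr (-\<sigma>) / ln (real x)"

lemma powr_neg_diff_le:
  fixes x y \<sigma> :: real
  assumes "0 < x" and "x \<le> y" and "0 \<le> \<sigma>"
  shows "x powr (-\<sigma>) - y powr (-\<sigma>) \<le> \<sigma> * (y - x) * x powr (-\<sigma> - 1)"
proof -
  have "1 - \<sigma> * (y / x - 1) \<le> 1 - \<sigma> * ln (y / x)"
    using assms by (intro diff_left_mono mult_left_mono ln_le_minus_one) auto
  also have "\<dots> \<le> exp (- \<sigma> * ln (y / x))"
    using exp_ge_add_one_self[of "- \<sigma> * ln (y / x)"] by simp
  also have "\<dots> = (y / x) powr (-\<sigma>)"
    using assms by (simp add: powr_def)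
  finally have "x powr (-\<sigma>) * (1 - \<sigma> * (y / x - 1)) \<le> x powr (-\<sigma>) * (y / x) powr (-\<sigma>)"
    by (intro mult_left_mono) simp_all
  also have "\<dots> = y powr (-\<sigma>)"
    using assms by (simp add: powr_divide)
  finally show ?thesis
    using assms by (simp add: powr_diff field_simps)
qed

lemma inverse_ln_diff_le:
  fixes x y :: real
  assumes "2 \<le> x" and "x \<le> y"
  shows "1 / ln x - 1 / ln y \<le> (y - x) / (x * (ln 2)\<^sup>2)"
proof -
  have ln: "0 < ln (2::real)" "ln 2 \<le> ln x" "ln x \<le> ln y"
    using assms by auto
  have "1 / ln x - 1 / ln y = ln (y / x) / (ln x * ln y)"
    using assms ln by (simp add: ln_div field_simps)
  also have "\<dots> \<le> ln (y / x) / (ln 2)\<^sup>2"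
    using assms ln by (intro divide_left_mono) (auto simp: power2_eq_square intro!: mult_mono)
  also have "\<dots> \<le> (y / x - 1) / (ln 2)\<^sup>2"
    using assms by (intro divide_right_mono ln_le_minus_one) auto
  also have "\<dots> = (y - x) / (x * (ln 2)\<^sup>2)"
    using assms by (simp add: field_simps)
  finally show ?thesis .
qed

lemma dirichlet_weight_diff_bounds:
  assumes "0 < \<sigma>" and "2 \<le> x" and "x \<le> y"
  shows "0 \<le> dirichlet_weight \<sigma> x - dirichlet_weight \<sigma> y"
    and "dirichlet_weight \<sigma> x - dirichlet_weight \<sigma> y
           \<le> (\<sigma> / ln 2 + 1 / (ln 2)\<^sup>2) * (real y - real x) * real x powr (-\<sigma> - 1)"
proof -
  define A B where "A = real x powr (-\<sigma>)" and "B = real y powr (-\<sigma>)"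
  have ln: "0 < ln (2::real)" "ln 2 \<le> ln (real x)" "ln (real x) \<le> ln (real y)"
      "0 < ln (real x)" "0 < ln (real y)"
    using assms by auto
  have AB: "0 \<le> B" "B \<le> A"
    using assms by (auto simp: A_def B_def intro: powr_mono2')
  have "1 / ln (real y) \<le> 1 / ln (real x)"
    using ln by (intro divide_left_mono) (auto intro!: mult_pos_pos)
  then have inv_ln: "0 \<le> 1 / ln (real x) - 1 / ln (real y)"
    by simp
  have split: "dirichlet_weight \<sigma> x - dirichlet_weight \<sigma> y
      = (A - B) / ln (real x) + B * (1 / ln (real x) - 1 / ln (real y))"
    by (simp add: dirichlet_weight_def A_def B_def diff_divide_distrib right_diff_distrib)
  show "0 \<le> dirichlet_weight \<sigma> x - dirichlet_weight \<sigma> y"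
    unfolding split using AB inv_ln ln by (intro add_nonneg_nonneg divide_nonneg_pos mult_nonneg_nonneg) auto
  have "(A - B) / ln (real x) \<le> (A - B) / ln 2"
    using AB ln by (intro divide_left_mono) auto
  also have "\<dots> \<le> \<sigma> * (real y - real x) * real x powr (-\<sigma> - 1) / ln 2"
    using assms ln unfolding A_def B_def by (intro divide_right_mono powr_neg_diff_le) auto
  finally have first: "(A - B) / ln (real x) \<le> \<sigma> / ln 2 * (real y - real x) * real x powr (-\<sigma> - 1)"
    by simp
  have "B * (1 / ln (real x) - 1 / ln (real y)) \<le> A * ((real y - real x) / (real x * (ln 2)\<^sup>2))"
    using assms AB inv_ln by (intro mult_mono inverse_ln_diff_le) auto
  also have "\<dots> = 1 / (ln 2)\<^sup>2 * (real y - real x) * real x powr (-\<sigma> - 1)"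
    using assms by (simp add: A_def powr_diff field_simps)
  finally show "dirichlet_weight \<sigma> x - dirichlet_weight \<sigma> y
      \<le> (\<sigma> / ln 2 + 1 / (ln 2)\<^sup>2) * (real y - real x) * real x powr (-\<sigma> - 1)"
    unfolding split using first by (simp add: algebra_simps)
qed

section \<open>The Dirichlet series of the Moebius function\<close>

lemma summable_on_powr:
  assumes "p < -1"
  shows "(\<lambda>d::nat. real d powr p) summable_on A"
proof -
  have "summable (\<lambda>d::nat. real d powr p)"
    using assms by (simp add: summable_real_powr_iff)
  then have "(\<lambda>d::nat. real d powr p) summable_on UNIV"
    by (rule summable_nonneg_imp_summable_on) simp
  then show ?thesis
    by (rule summable_on_subset_banach) simp
qed

lemma has_sum_zeta_real:
  assumes "1 < u"
  shows "((\<lambda>m::nat. real m powr (-u)) has_sum zeta_real u) {1..}"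
proof -
  have "summable (\<lambda>m::nat. real (Suc m) powr (-u))"
    using assms by (subst summable_Suc_iff) (simp add: summable_real_powr_iff)
  then have "(\<lambda>m::nat. real (Suc m) powr (-u)) sums zeta_real u"
    by (simp add: zeta_real_def powr_minus divide_inverse summable_sums)
  then show ?thesis
    unfolding has_sum_atLeast1_iff by (rule sums_nonneg_imp_has_sum) simp
qed

lemma abs_summable_mobius_powr:
  assumes "1 < u"
  shows "(\<lambda>d::nat. norm (mobius d * real d powr (-u))) summable_on A"
proof (rule summable_on_comparison_test)
  show "(\<lambda>d::nat. real d powr (-u)) summable_on A"
    using assms by (intro summable_on_powr) simp
  show "norm (mobius d * real d powr (-u)) \<le> real d powr (-u)" for d
    using abs_mobius_le[of d] by (simp add: abs_mult mult_left_le_one_le)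
qed simp

lemma abs_summable_mobius_zeta_product:
  assumes u: "1 < u"
  shows "(\<lambda>x. norm (case x of (d, m) \<Rightarrow> mobius d * real d powr (-u) * real m powr (-u)))
      summable_on Sigma {1::nat..} (\<lambda>_. {1::nat..})"
proof (rule summable_on_SigmaI)
  show "((\<lambda>m. norm (case (d, m) of (d, m) \<Rightarrow> mobius d * real d powr (-u) * real m powr (-u)))
      has_sum norm (mobius d * real d powr (-u)) * zeta_real u) {1..}" for d
    using has_sum_cmult_right[OF has_sum_zeta_real[OF u], of "norm (mobius d * real d powr (-u))"]
    by (simp add: abs_mult)
  show "(\<lambda>d. norm (mobius d * real d powr (-u)) * zeta_real u) summable_on {1..}"
    using abs_summable_mobius_powr[OF u] by (rule summable_on_cmult_left)
qed simp

lemma infsum_mobius_powr_times_zeta: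
  assumes u: "1 < u"
  shows "(\<Sum>\<^sub>\<infinity>d\<in>{1..}. mobius d * real d powr (-u)) * zeta_real u = 1"
proof -
  define M where "M = (\<Sum>\<^sub>\<infinity>d\<in>{1::nat..}. mobius d * real d powr (-u))"
  define P where "P = (\<lambda>(d::nat, m::nat). mobius d * real d powr (-u) * real m powr (-u))"
  have zeta: "((\<lambda>m::nat. real m powr (-u)) has_sum zeta_real u) {1..}"
    using u by (rule has_sum_zeta_real)
  have "(\<lambda>d. mobius d * real d powr (-u)) summable_on {1..}"
    using abs_summable_mobius_powr[OF u] by (rule abs_summable_summable)
  then have M: "((\<lambda>d. mobius d * real d powr (-u)) has_sum M) {1..}"
    unfolding M_def by (rule has_sum_infsum)
  have "(\<lambda>x. norm (P x)) summable_on Sigma {1..} (\<lambda>_. {1..})"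
    using u unfolding P_def by (rule abs_summable_mobius_zeta_product)
  then have "P summable_on Sigma {1..} (\<lambda>_. {1..})"
    by (rule abs_summable_summable)
  then obtain S where S: "(P has_sum S) (Sigma {1..} (\<lambda>_. {1..}))"
    by (auto simp: summable_on_def)
  have "((\<lambda>d. mobius d * real d powr (-u) * zeta_real u) has_sum S) {1..}"
    using S by (rule has_sum_Sigma') (use has_sum_cmult_right[OF zeta] in \<open>simp add: P_def\<close>)
  then have "S = M * zeta_real u"
    using has_sum_cmult_left[OF M] by (rule has_sum_unique)
  have "((\<lambda>(N, d). mobius d * real N powr (-u)) has_sum S) (Sigma {1..} (\<lambda>N. {d. d dvd N}))"
    using S unfolding has_sum_reindex_divisors[symmetric]
    by (rule has_sum_cong[THEN iffD1, rotated]) (auto simp: P_def powr_mult)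
  then have "((\<lambda>N::nat. if N = 1 then 1 else 0) has_sum S) {1..}"
  proof (rule has_sum_Sigma')
    fix N :: nat
    assume "N \<in> {1..}"
    then show "((\<lambda>d. case (N, d) of (N, d) \<Rightarrow> mobius d * real N powr (-u)) has_sum (if N = 1 then 1 else 0)) {d. d dvd N}"
      by (intro has_sum_finiteI) (simp_all add: sum_mobius_divisors flip: sum_distrib_right)
  qed
  moreover have "((\<lambda>N::nat. if N = 1 then 1 else 0) has_sum (1::real)) {1..}"
    by (rule has_sum_finite_neutralI[of "{1}"]) auto
  ultimately have "S = 1"
    by (rule has_sum_unique)
  with \<open>S = M * zeta_real u\<close> show ?thesis
    by (simp add: M_def)
qed

lemma tendsto_sum_mobius_powr:
  assumes "1 < u"
  shows "(\<lambda>D. \<Sum>d\<in>{1..D}. mobius d * real d powr (-u)) \<longlonglongrightarrow> 1 / zeta_real u"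
proof -
  have "(\<lambda>d. mobius d * real d powr (-u)) summable_on {1..}"
    using abs_summable_mobius_powr[OF assms] by (rule abs_summable_summable)
  then have "(\<lambda>D. \<Sum>d\<in>{1..D}. mobius d * real d powr (-u)) \<longlonglongrightarrow> (\<Sum>\<^sub>\<infinity>d\<in>{1..}. mobius d * real d powr (-u))"
    by (intro has_sum_atLeast1_imp_tendsto has_sum_infsum)
  moreover have "(\<Sum>\<^sub>\<infinity>d\<in>{1..}. mobius d * real d powr (-u)) = 1 / zeta_real u"
    using infsum_mobius_powr_times_zeta[OF assms] by (auto simp: eq_divide_eq)
  ultimately show ?thesis
    by simp
qed

section \<open>Absolute convergence and the boundary term\<close>

lemma norm_le_powr_if_tendsto_0:
  fixes f :: "nat \<Rightarrow> 'a::real_normed_vector"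
  assumes "(\<lambda>k. norm (f k) / real k powr v) \<longlonglongrightarrow> 0"
  obtains C where "0 < C" and "\<And>k. 1 \<le> k \<Longrightarrow> norm (f k) \<le> C * real k powr v"
proof -
  obtain C where C: "0 < C" "\<And>k. norm (norm (f k) / real k powr v) \<le> C"
    using convergent_imp_Bseq[OF convergentI[OF assms]] by (auto elim: BseqE)
  have "norm (f k) \<le> C * real k powr v" if "1 \<le> k" for k
  proof -
    have "norm (f k) / real k powr v \<le> C"
      using C(2)[of k] by simp
    then show ?thesis
      using that by (simp add: divide_le_eq mult.commute)
  qed
  with C(1) show thesis
    by (rule that)
qed

lemma summable_on_powr_triple:
  assumes "1 < \<sigma>" and "p < -1"
  shows "(\<lambda>(k, d, r). real k powr p * real d powr (-\<sigma> - 1))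
      summable_on Sigma {1::nat..} (\<lambda>k. Sigma {1::nat..} (\<lambda>d. {..<d}))"
proof -
  define E where "E = (\<lambda>(k::nat, d::nat, r::nat). real k powr p * real d powr (-\<sigma> - 1))"
  define Z where "Z = (\<Sum>\<^sub>\<infinity>d\<in>{1::nat..}. real d powr (-\<sigma>))"
  have Z: "((\<lambda>d::nat. real d powr (-\<sigma>)) has_sum Z) {1..}"
    unfolding Z_def using assms by (intro has_sum_infsum summable_on_powr) simp
  have slice: "((\<lambda>r. E (k, d, r)) has_sum real k powr p * real d powr (-\<sigma>)) {..<d}" if "1 \<le> d" for k d
  proof (rule has_sum_finiteI)
    have "real d * real d powr (-\<sigma> - 1) = real d powr (-\<sigma>)"
      using that by (simp add: powr_diff)
    then show "real k powr p * real d powr (-\<sigma>) = (\<Sum>r<d. E (k, d, r))"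
      by (simp add: E_def mult.left_commute)
  qed simp
  have row: "((\<lambda>y. E (k, y)) has_sum real k powr p * Z) (Sigma {1..} (\<lambda>d. {..<d}))" for k
  proof (rule has_sum_SigmaI)
    show "((\<lambda>d. real k powr p * real d powr (-\<sigma>)) has_sum real k powr p * Z) {1..}"
      using Z by (rule has_sum_cmult_right)
    show "(\<lambda>y. E (k, y)) summable_on Sigma {1..} (\<lambda>d. {..<d})"
    proof (rule summable_on_SigmaI)
      show "(\<lambda>d. real k powr p * real d powr (-\<sigma>)) summable_on {1..}"
        using has_sum_cmult_right[OF Z] by (auto simp: summable_on_def)
      show "((\<lambda>r. E (k, d, r)) has_sum real k powr p * real d powr (-\<sigma>)) {..<d}" if "d \<in> {1..}" for d
        using that by (intro slice) simp
      show "0 \<le> E (k, d, r)" for d r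
        by (simp add: E_def)
    qed
    show "((\<lambda>r. E (k, d, r)) has_sum real k powr p * real d powr (-\<sigma>)) {..<d}" if "d \<in> {1..}" for d
      using that by (intro slice) simp
  qed
  have "E summable_on Sigma {1..} (\<lambda>k. Sigma {1..} (\<lambda>d. {..<d}))"
  proof (rule summable_on_SigmaI[OF row])
    show "(\<lambda>k. real k powr p * Z) summable_on {1..}"
      using assms(2) by (intro summable_on_cmult_left summable_on_powr)
  qed (auto simp: E_def)
  then show ?thesis
    unfolding E_def .
qed

lemma norm_mobius_triple_dirichlet_weight_le:
  assumes "1 < \<sigma>" and "2 \<le> k" and "1 \<le> d"
  shows "norm (mobius_triple s (dirichlet_weight \<sigma>) (k, d, r))
      \<le> (\<sigma> / ln 2 + 1 / (ln 2)\<^sup>2) * norm (s k) * (real k powr (-\<sigma> - 1) * real d powr (-\<sigma> - 1))"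
proof -
  define K where "K = \<sigma> / ln 2 + 1 / (ln 2)\<^sup>2"
  define \<Delta> where "\<Delta> = dirichlet_weight \<sigma> (d * k + r) - dirichlet_weight \<sigma> (d * k + r + 1)"
  have "1 * 2 \<le> d * k"
    using assms by (intro mult_le_mono) auto
  then have dk: "2 \<le> d * k" "2 \<le> d * k + r"
    by simp_all
  have K: "0 < K"
    using assms by (simp add: K_def add_pos_pos)
  have \<Delta>: "0 \<le> \<Delta>" "\<Delta> \<le> K * real (d * k + r) powr (-\<sigma> - 1)"
    using dirichlet_weight_diff_bounds[of \<sigma> "d * k + r" "d * k + r + 1"] assms dk
    by (simp_all add: \<Delta>_def K_def)
  have "real (d * k + r) powr (-\<sigma> - 1) \<le> real (d * k) powr (-\<sigma> - 1)"
    using assms dk by (intro powr_mono2') auto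
  also have "\<dots> = real k powr (-\<sigma> - 1) * real d powr (-\<sigma> - 1)"
    by (simp add: powr_mult)
  finally have "\<Delta> \<le> K * (real k powr (-\<sigma> - 1) * real d powr (-\<sigma> - 1))"
    using \<Delta>(2) K by (meson mult_left_mono less_imp_le order_trans)
  moreover have "norm (mobius_triple s (dirichlet_weight \<sigma>) (k, d, r)) = \<bar>mobius d\<bar> * norm (s k) * \<Delta>"
    using \<Delta>(1) by (simp add: mobius_triple_def \<Delta>_def norm_mult del: of_real_diff)
  ultimately have "norm (mobius_triple s (dirichlet_weight \<sigma>) (k, d, r))
      \<le> 1 * norm (s k) * (K * (real k powr (-\<sigma> - 1) * real d powr (-\<sigma> - 1)))"
    using abs_mobius_le[of d] \<Delta>(1) by (auto intro!: mult_mono mult_left_le_one_le)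
  then show ?thesis
    by (simp add: K_def mult_ac)
qed

lemma norm_mobius_triple_S_fun_le:
  assumes C: "\<And>k. 1 \<le> k \<Longrightarrow> norm (S_fun a (real k)) \<le> C * real k powr v"
    and "0 < C" and \<sigma>: "1 < \<sigma>" and "1 \<le> k" and "1 \<le> d"
  shows "norm (mobius_triple (\<lambda>k. S_fun a (real k)) (dirichlet_weight \<sigma>) (k, d, r))
      \<le> C * (\<sigma> / ln 2 + 1 / (ln 2)\<^sup>2) * (real k powr (v - \<sigma> - 1) * real d powr (-\<sigma> - 1))"
proof (cases "k = 1")
  case True
  then show ?thesis
    using assms by (simp add: mobius_triple_def)
next
  case False
  define K where "K = \<sigma> / ln 2 + 1 / (ln 2)\<^sup>2"
  from False assms have "2 \<le> k"
    by simp
  have "norm (mobius_triple (\<lambda>k. S_fun a (real k)) (dirichlet_weight \<sigma>) (k, d, r))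
      \<le> K * norm (S_fun a (real k)) * (real k powr (-\<sigma> - 1) * real d powr (-\<sigma> - 1))"
    using norm_mobius_triple_dirichlet_weight_le[OF \<sigma> \<open>2 \<le> k\<close> \<open>1 \<le> d\<close>] by (simp add: K_def)
  also have "\<dots> \<le> K * (C * real k powr v) * (real k powr (-\<sigma> - 1) * real d powr (-\<sigma> - 1))"
    using C[OF \<open>1 \<le> k\<close>] \<sigma> by (intro mult_right_mono mult_left_mono) (auto simp: K_def)
  also have "\<dots> = C * K * (real k powr (v - \<sigma> - 1) * real d powr (-\<sigma> - 1))"
    by (simp add: powr_add[symmetric] mult_ac) (simp add: algebra_simps)
  finally show ?thesis
    by (simp add: K_def)
qed

lemma summable_on_dirichlet_weight_triple:
  assumes hS: "\<And>v. 1 < v \<Longrightarrow> (\<lambda>k. norm (S_fun a (real k)) / real k powr v) \<longlonglongrightarrow> 0"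
    and \<sigma>: "1 < \<sigma>"
  shows "(\<lambda>x. norm (mobius_triple (\<lambda>k. S_fun a (real k)) (dirichlet_weight \<sigma>) x))
      summable_on Sigma {1..} (\<lambda>k. Sigma {1..} (\<lambda>d. {..<d}))"
proof -
  define v where "v = (1 + \<sigma>) / 2"
  define K where "K = \<sigma> / ln 2 + 1 / (ln 2)\<^sup>2"
  have v: "1 < v" "v < \<sigma>"
    using \<sigma> by (simp_all add: v_def)
  obtain C where C: "0 < C" "\<And>k. 1 \<le> k \<Longrightarrow> norm (S_fun a (real k)) \<le> C * real k powr v"
    using norm_le_powr_if_tendsto_0[OF hS[OF v(1)]] by blast
  have "(\<lambda>(k, d, r). C * K * (real k powr (v - \<sigma> - 1) * real d powr (-\<sigma> - 1)))
      summable_on Sigma {1..} (\<lambda>k. Sigma {1..} (\<lambda>d. {..<d}))"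
    using summable_on_cmult_right[OF summable_on_powr_triple[OF \<sigma>, of "v - \<sigma> - 1"], of "C * K"] v
    by (simp add: case_prod_unfold)
  then show ?thesis
  proof (rule summable_on_comparison_test)
    fix x :: "nat \<times> nat \<times> nat"
    assume "x \<in> Sigma {1..} (\<lambda>k. Sigma {1..} (\<lambda>d. {..<d}))"
    then show "norm (mobius_triple (\<lambda>k. S_fun a (real k)) (dirichlet_weight \<sigma>) x)
        \<le> (case x of (k, d, r) \<Rightarrow> C * K * (real k powr (v - \<sigma> - 1) * real d powr (-\<sigma> - 1)))"
      using norm_mobius_triple_S_fun_le[OF C(2) C(1) \<sigma>] by (auto simp: K_def)
  qed simp
qed
lemma norm_sum_log_weighted_le:
  assumes C: "\<And>k. 1 \<le> k \<Longrightarrow> norm (S_fun a (real k)) \<le> C * real k powr v" and v: "1 < v"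
  shows "norm (\<Sum>j\<in>{1..M}. a j * of_real (ln (real j)))
      \<le> C * (\<Sum>\<^sub>\<infinity>d\<in>{1::nat..}. real d powr (-v)) * real M powr v"
proof -
  define Z where "Z = (\<Sum>\<^sub>\<infinity>d\<in>{1::nat..}. real d powr (-v))"
  have Z: "((\<lambda>d::nat. real d powr (-v)) has_sum Z) {1..}"
    unfolding Z_def using v by (intro has_sum_infsum summable_on_powr) simp
  have "0 \<le> C"
    using C[of 1] by simp
  have "norm (\<Sum>j\<in>{1..M}. a j * of_real (ln (real j)))
      \<le> (\<Sum>d\<in>{1..M}. norm (of_real (mobius d) * S_fun a (real (M div d))))"
    unfolding sum_mobius_S_fun[symmetric] by (rule norm_sum)
  also have "\<dots> \<le> (\<Sum>d\<in>{1..M}. C * real M powr v * real d powr (-v))"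
  proof (rule sum_mono)
    fix d assume d: "d \<in> {1..M}"
    then have "1 \<le> M div d"
      by (simp add: Suc_le_eq div_greater_zero_iff)
    have "norm (of_real (mobius d) * S_fun a (real (M div d)) :: complex) \<le> norm (S_fun a (real (M div d)))"
      using abs_mobius_le[of d] by (simp add: norm_mult mult_left_le_one_le)
    also have "\<dots> \<le> C * real (M div d) powr v"
      using \<open>1 \<le> M div d\<close> by (rule C)
    also have "\<dots> \<le> C * (real M / real d) powr v"
      using \<open>0 \<le> C\<close> v by (intro mult_left_mono powr_mono2 of_nat_div_le_of_nat) auto
    also have "\<dots> = C * real M powr v * real d powr (-v)"
      by (simp add: powr_divide powr_minus_divide)
    finally show "norm (of_real (mobius d) * S_fun a (real (M div d))) \<le> C * real M powr v * real d powr (-v)" .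
  qed
  also have "\<dots> = C * real M powr v * (\<Sum>d\<in>{1..M}. real d powr (-v))"
    by (simp add: sum_distrib_left)
  also have "\<dots> \<le> C * real M powr v * Z"
    using \<open>0 \<le> C\<close> by (intro mult_left_mono finite_sum_le_has_sum[OF Z]) auto
  finally show ?thesis
    by (simp add: Z_def mult_ac)
qed

lemma dirichlet_weight_Suc_le:
  assumes "1 \<le> M" and "0 \<le> \<sigma>"
  shows "dirichlet_weight \<sigma> (M + 1) \<le> real M powr (-\<sigma>) / ln 2"
proof -
  have "dirichlet_weight \<sigma> (M + 1) \<le> real (M + 1) powr (-\<sigma>) / ln 2"
    unfolding dirichlet_weight_def using assms by (intro divide_left_mono) auto
  also have "\<dots> \<le> real M powr (-\<sigma>) / ln 2"
    using assms by (intro divide_right_mono powr_mono2') auto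
  finally show ?thesis .
qed

lemma tendsto_boundary_dirichlet_weight:
  assumes hS: "\<And>v. 1 < v \<Longrightarrow> (\<lambda>k. norm (S_fun a (real k)) / real k powr v) \<longlonglongrightarrow> 0"
    and \<sigma>: "1 < \<sigma>"
  shows "(\<lambda>M. (\<Sum>j\<in>{1..M}. a j * of_real (ln (real j))) * of_real (dirichlet_weight \<sigma> (M + 1))) \<longlonglongrightarrow> 0"
proof -
  define v where "v = (1 + \<sigma>) / 2"
  define Z where "Z = (\<Sum>\<^sub>\<infinity>d\<in>{1::nat..}. real d powr (-v))"
  have v: "1 < v" "v < \<sigma>"
    using \<sigma> by (simp_all add: v_def)
  obtain C where C: "0 < C" "\<And>k. 1 \<le> k \<Longrightarrow> norm (S_fun a (real k)) \<le> C * real k powr v"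
    using norm_le_powr_if_tendsto_0[OF hS[OF v(1)]] by blast
  have "0 \<le> Z"
    unfolding Z_def by (rule infsum_nonneg) simp
  have bound: "norm ((\<Sum>j\<in>{1..M}. a j * of_real (ln (real j))) * of_real (dirichlet_weight \<sigma> (M + 1)))
      \<le> C * Z / ln 2 * real M powr (v - \<sigma>)" if "1 \<le> M" for M
  proof -
    have weight: "0 \<le> dirichlet_weight \<sigma> (M + 1)"
      by (simp add: dirichlet_weight_def)
    have weight_le: "dirichlet_weight \<sigma> (M + 1) \<le> real M powr (-\<sigma>) / ln 2"
      using that \<sigma> by (intro dirichlet_weight_Suc_le) auto
    have "norm ((\<Sum>j\<in>{1..M}. a j * of_real (ln (real j))) * of_real (dirichlet_weight \<sigma> (M + 1)))
        = norm (\<Sum>j\<in>{1..M}. a j * of_real (ln (real j))) * dirichlet_weight \<sigma> (M + 1)"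
      using weight by (simp add: norm_mult)
    also have "\<dots> \<le> (C * Z * real M powr v) * (real M powr (-\<sigma>) / ln 2)"
      using norm_sum_log_weighted_le[OF C(2) v(1), of M] weight weight_le C(1) \<open>0 \<le> Z\<close>
      by (intro mult_mono) (auto simp: Z_def)
    also have "\<dots> = C * Z / ln 2 * real M powr (v - \<sigma>)"
      by (simp add: powr_diff powr_minus_divide)
    finally show ?thesis .
  qed
  have "\<forall>\<^sub>F M in sequentially. norm ((\<Sum>j\<in>{1..M}. a j * of_real (ln (real j)))
      * of_real (dirichlet_weight \<sigma> (M + 1))) \<le> C * Z / ln 2 * real M powr (v - \<sigma>)"
    using bound by (rule eventually_sequentiallyI)
  moreover have "(\<lambda>M. C * Z / ln 2 * real M powr (v - \<sigma>)) \<longlonglongrightarrow> 0"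
    using v by (intro tendsto_mult_right_zero tendsto_neg_powr filterlim_real_sequentially) simp
  ultimately show ?thesis
    by (rule Lim_null_comparison)
qed

section \<open>Evaluation of the inner sums\<close>

lemma has_integral_dirichlet_weight:
  assumes "2 \<le> x"
  shows "((\<lambda>u. real x powr (-u)) has_integral dirichlet_weight \<sigma> x) {\<sigma>..}"
  using has_integral_powr_neg[of "real x" \<sigma>] assms by (simp add: dirichlet_weight_def)

lemma has_integral_sum_mobius_powr_times_diff:
  assumes "2 \<le> k"
  shows "((\<lambda>u. (\<Sum>d\<in>{1..D}. mobius d * real d powr (-u)) * (real k powr (-u) - real (k + 1) powr (-u)))
      has_integral (\<Sum>d\<in>{1..D}. mobius d * (dirichlet_weight \<sigma> (d * k) - dirichlet_weight \<sigma> (d * k + d)))) {\<sigma>..}"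
proof -
  have "real (d * k) powr (-u) - real (d * k + d) powr (-u) = real d powr (-u) * (real k powr (-u) - real (k + 1) powr (-u))"
    for d u
  proof -
    have "real (d * k + d) = real d * real (k + 1)"
      by (simp add: algebra_simps)
    then show ?thesis
      by (simp add: powr_mult right_diff_distrib)
  qed
  then have "(\<lambda>u. (\<Sum>d\<in>{1..D}. mobius d * real d powr (-u)) * (real k powr (-u) - real (k + 1) powr (-u)))
      = (\<lambda>u. \<Sum>d\<in>{1..D}. mobius d * (real (d * k) powr (-u) - real (d * k + d) powr (-u)))"
    by (simp add: fun_eq_iff sum_distrib_right mult.assoc)
  moreover have "((\<lambda>u. \<Sum>d\<in>{1..D}. mobius d * (real (d * k) powr (-u) - real (d * k + d) powr (-u)))
      has_integral (\<Sum>d\<in>{1..D}. mobius d * (dirichlet_weight \<sigma> (d * k) - dirichlet_weight \<sigma> (d * k + d)))) {\<sigma>..}"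
  proof (intro has_integral_sum has_integral_mult_right has_integral_diff has_integral_dirichlet_weight)
    fix d assume "d \<in> {1..D}"
    then have "1 * 2 \<le> d * k"
      using assms by (intro mult_le_mono) auto
    then show "2 \<le> d * k" "2 \<le> d * k + d"
      by simp_all
  qed simp
  ultimately show ?thesis
    by simp
qed

lemma abs_sum_mobius_powr_le:
  assumes "1 < \<sigma>" and "\<sigma> \<le> u"
  shows "\<bar>\<Sum>d\<in>{1..D}. mobius d * real d powr (-u)\<bar> \<le> (\<Sum>\<^sub>\<infinity>d\<in>{1::nat..}. real d powr (-\<sigma>))"
proof -
  have "\<bar>\<Sum>d\<in>{1..D}. mobius d * real d powr (-u)\<bar> \<le> (\<Sum>d\<in>{1..D}. real d powr (-\<sigma>))"
  proof (rule order_trans[OF sum_abs sum_mono])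
    fix d assume "d \<in> {1..D}"
    then have "real d powr (-u) \<le> real d powr (-\<sigma>)"
      using assms by (intro powr_mono) auto
    moreover have "\<bar>mobius d\<bar> * real d powr (-u) \<le> real d powr (-u)"
      using abs_mobius_le[of d] by (intro mult_left_le_one_le) auto
    ultimately show "\<bar>mobius d * real d powr (-u)\<bar> \<le> real d powr (-\<sigma>)"
      by (simp add: abs_mult)
  qed
  also have "\<dots> \<le> (\<Sum>\<^sub>\<infinity>d\<in>{1::nat..}. real d powr (-\<sigma>))"
    using assms by (intro finite_sum_le_has_sum[OF has_sum_infsum[OF summable_on_powr[of "-\<sigma>" "{1..}"]]]) auto
  finally show ?thesis .
qed

lemma tendsto_sum_mobius_dirichlet_weight_diff:
  assumes \<sigma>: "1 < \<sigma>" and k: "2 \<le> k"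
  shows "(\<lambda>D. \<Sum>d\<in>{1..D}. mobius d * (dirichlet_weight \<sigma> (d * k) - dirichlet_weight \<sigma> (d * k + d)))
      \<longlonglongrightarrow> integral {\<sigma>..} (\<lambda>u. (1 / real k powr u - 1 / real (k + 1) powr u) / zeta_real u)"
proof -
  define w where "w u = real k powr (-u) - real (k + 1) powr (-u)" for u
  define f where "f D u = (\<Sum>d\<in>{1..D}. mobius d * real d powr (-u)) * w u" for D u
  define Z where "Z = (\<Sum>\<^sub>\<infinity>d\<in>{1::nat..}. real d powr (-\<sigma>))"
  have f_integral: "(f D has_integral (\<Sum>d\<in>{1..D}. mobius d * (dirichlet_weight \<sigma> (d * k) - dirichlet_weight \<sigma> (d * k + d)))) {\<sigma>..}"
    for D
    unfolding f_def w_def using k by (rule has_integral_sum_mobius_powr_times_diff)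
  have "norm (f D u) \<le> Z * w u" if "u \<in> {\<sigma>..}" for D u
  proof -
    have "0 \<le> w u"
      unfolding w_def using that \<sigma> k by (simp add: powr_mono2')
    then show ?thesis
      using abs_sum_mobius_powr_le[OF \<sigma>, of u D] that by (simp add: f_def Z_def abs_mult mult_right_mono)
  qed
  moreover have "((\<lambda>u. Z * w u) has_integral Z * (dirichlet_weight \<sigma> k - dirichlet_weight \<sigma> (k + 1))) {\<sigma>..}"
    unfolding w_def using k by (intro has_integral_mult_right has_integral_diff has_integral_dirichlet_weight) auto
  moreover have "(\<lambda>D. f D u) \<longlonglongrightarrow> (1 / real k powr u - 1 / real (k + 1) powr u) / zeta_real u"
    if "u \<in> {\<sigma>..}" for u
    using tendsto_mult_right[OF tendsto_sum_mobius_powr, of u "w u"] that \<sigma>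
    by (simp add: f_def w_def powr_minus_divide)
  ultimately have "(\<lambda>D. integral {\<sigma>..} (f D))
      \<longlonglongrightarrow> integral {\<sigma>..} (\<lambda>u. (1 / real k powr u - 1 / real (k + 1) powr u) / zeta_real u)"
    using f_integral by (intro dominated_convergence(2) has_integral_integrable) blast+
  moreover have "integral {\<sigma>..} (f D)
      = (\<Sum>d\<in>{1..D}. mobius d * (dirichlet_weight \<sigma> (d * k) - dirichlet_weight \<sigma> (d * k + d)))" for D
    using f_integral by (rule integral_unique)
  ultimately show ?thesis
    by simp
qed

lemma infsum_mobius_dirichlet_weight_diff:
  fixes c :: complex
  assumes "1 < \<sigma>" and "2 \<le> k"
    and "(\<lambda>d. of_real (mobius d) * c * of_real (dirichlet_weight \<sigma> (d * k) - dirichlet_weight \<sigma> (d * k + d))) summable_on {1..}"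
  shows "(\<Sum>\<^sub>\<infinity>d\<in>{1..}. of_real (mobius d) * c * of_real (dirichlet_weight \<sigma> (d * k) - dirichlet_weight \<sigma> (d * k + d)))
      = c * of_real (integral {\<sigma>..} (\<lambda>u. (1 / real k powr u - 1 / real (k + 1) powr u) / zeta_real u))"
proof (rule LIMSEQ_unique)
  show "(\<lambda>D. \<Sum>d\<in>{1..D}. of_real (mobius d) * c * of_real (dirichlet_weight \<sigma> (d * k) - dirichlet_weight \<sigma> (d * k + d)))
      \<longlonglongrightarrow> (\<Sum>\<^sub>\<infinity>d\<in>{1..}. of_real (mobius d) * c * of_real (dirichlet_weight \<sigma> (d * k) - dirichlet_weight \<sigma> (d * k + d)))"
    using assms(3) by (intro has_sum_atLeast1_imp_tendsto has_sum_infsum)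
  have "(\<lambda>D. c * of_real (\<Sum>d\<in>{1..D}. mobius d * (dirichlet_weight \<sigma> (d * k) - dirichlet_weight \<sigma> (d * k + d))))
      \<longlonglongrightarrow> c * of_real (integral {\<sigma>..} (\<lambda>u. (1 / real k powr u - 1 / real (k + 1) powr u) / zeta_real u))"
    using assms(1,2) by (intro tendsto_mult_left tendsto_of_real tendsto_sum_mobius_dirichlet_weight_diff)
  then show "(\<lambda>D. \<Sum>d\<in>{1..D}. of_real (mobius d) * c * of_real (dirichlet_weight \<sigma> (d * k) - dirichlet_weight \<sigma> (d * k + d)))
      \<longlonglongrightarrow> c * of_real (integral {\<sigma>..} (\<lambda>u. (1 / real k powr u - 1 / real (k + 1) powr u) / zeta_real u))"
    by (simp add: sum_distrib_left mult_ac del: of_real_diff)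
qed

section \<open>The series g\<close>

lemma g_fun_eq_if_tendsto:
  assumes "(\<lambda>M. \<Sum>j\<in>{1..M}. a j * of_real (ln (real j) * dirichlet_weight \<sigma> j)) \<longlonglongrightarrow> L"
  shows "g_fun a \<sigma> = a 1 + L"
proof -
  have partial: "(\<Sum>m<M. a (m + 1) * of_real (real (m + 1) powr (-\<sigma>)))
      = a 1 + (\<Sum>j\<in>{1..M}. a j * of_real (ln (real j) * dirichlet_weight \<sigma> j))" if "1 \<le> M" for M
  proof -
    have "(\<Sum>m<M. a (m + 1) * of_real (real (m + 1) powr (-\<sigma>))) = (\<Sum>j\<in>{1..M}. a j * of_real (real j powr (-\<sigma>)))"
      by (induction M) simp_all
    also have "\<dots> = (\<Sum>j\<in>{1..M}. a j * of_real (ln (real j) * dirichlet_weight \<sigma> j) + (if j = 1 then a 1 else 0))"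
      by (intro sum.cong refl) (auto simp: dirichlet_weight_def)
    also have "\<dots> = a 1 + (\<Sum>j\<in>{1..M}. a j * of_real (ln (real j) * dirichlet_weight \<sigma> j))"
      using that by (simp add: sum.distrib add.commute)
    finally show ?thesis .
  qed
  have "(\<lambda>M. a 1 + (\<Sum>j\<in>{1..M}. a j * of_real (ln (real j) * dirichlet_weight \<sigma> j))) \<longlonglongrightarrow> a 1 + L"
    using assms by (rule tendsto_add[OF tendsto_const])
  then have "(\<lambda>m. a (m + 1) * of_real (real (m + 1) powr (-\<sigma>))) sums (a 1 + L)"
    unfolding sums_def by (rule Lim_transform_eventually) (intro eventually_sequentiallyI[of 1] partial[symmetric])
  then show ?thesis
    unfolding g_fun_def by (rule sums_unique[symmetric])
qed

lemma sums_S_fun_integral_zeta: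
  assumes hS: "\<And>v. 1 < v \<Longrightarrow> (\<lambda>k. norm (S_fun a (real k)) / real k powr v) \<longlonglongrightarrow> 0"
    and \<sigma>: "1 < \<sigma>"
  shows "(\<lambda>j. S_fun a (real (j + 2)) * of_real (integral {\<sigma>..}
      (\<lambda>u. (1 / real (j + 2) powr u - 1 / real (j + 3) powr u) / zeta_real u))) sums (g_fun a \<sigma> - a 1)"
proof -
  obtain L where by_j: "(\<lambda>M. \<Sum>j\<in>{1..M}. a j * of_real (ln (real j) * dirichlet_weight \<sigma> j)) \<longlonglongrightarrow> L"
    and by_k: "((\<lambda>k. \<Sum>\<^sub>\<infinity>d\<in>{1..}. of_real (mobius d) * S_fun a (real k)
        * of_real (dirichlet_weight \<sigma> (d * k) - dirichlet_weight \<sigma> (d * k + d))) has_sum L) {1..}"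
    and inner: "\<And>k. 1 \<le> k \<Longrightarrow> (\<lambda>d. of_real (mobius d) * S_fun a (real k)
        * of_real (dirichlet_weight \<sigma> (d * k) - dirichlet_weight \<sigma> (d * k + d))) summable_on {1..}"
    using tendsto_weighted_sum_S_fun[OF summable_on_dirichlet_weight_triple[OF hS \<sigma>]
        tendsto_boundary_dirichlet_weight[OF hS \<sigma>]] by blast
  define T where "T k = (\<Sum>\<^sub>\<infinity>d\<in>{1..}. of_real (mobius d) * S_fun a (real k)
      * of_real (dirichlet_weight \<sigma> (d * k) - dirichlet_weight \<sigma> (d * k + d)))" for k
  have "(\<lambda>n. T (Suc n)) sums L"
    using by_k unfolding T_def by (rule has_sum_atLeast1_imp_sums)
  moreover have "T (Suc 0) = 0"
    by (simp add: T_def)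
  ultimately have "(\<lambda>j. T (Suc (Suc j))) sums L"
    using sums_Suc_iff[of "\<lambda>n. T (Suc n)" L] by simp
  moreover have "T (Suc (Suc j)) = S_fun a (real (j + 2)) * of_real (integral {\<sigma>..}
      (\<lambda>u. (1 / real (j + 2) powr u - 1 / real (j + 3) powr u) / zeta_real u))" for j
    unfolding T_def using infsum_mobius_dirichlet_weight_diff[OF \<sigma> _ inner, of "Suc (Suc j)"]
    by (simp add: numeral_2_eq_2 numeral_3_eq_3)
  ultimately show ?thesis
    using g_fun_eq_if_tendsto[OF by_j] by simp
qed

theorem lemma3:
  fixes a :: "nat \<Rightarrow> complex" and n :: nat
  assumes hS: "\<And>v. v > 1 \<Longrightarrow> (\<lambda>k. norm (S_fun a (real k)) / real k powr v) \<longlonglongrightarrow> 0"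
    and hn: "n \<ge> 2"
  shows "(\<Sum>m\<in>{1..n}. a m * of_nat (n div m))
           - of_nat n * g_fun a (1 + 1 / ln (real n))
           - S_fun a (real n) / of_real (ln (real n))
         = (\<Sum>k\<in>{2..n - 1}. S_fun a (real k) *
              of_real (integral {0..} (\<lambda>t. F_t t (real n / real k) / real k powr t
                                         - F_t t (real n / real (k + 1)) / real (k + 1) powr t)))
           - of_nat n * (\<Sum>j. S_fun a (real (j + 2)) *
              of_real (integral {1 + 1 / ln (real n)..}
                 (\<lambda>u. (1 / real (j + 2) powr u - 1 / real (j + 3) powr u) / zeta_real u)))"
proof -
  define \<sigma> where "\<sigma> = 1 + 1 / ln (real n)"
  have "1 < \<sigma>"
    using hn by (simp add: \<sigma>_def)
  have integral_eq: "integral {0..} (\<lambda>t. F_t t (real n / real k) / real k powr t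
                                   - F_t t (real n / real (k + 1)) / real (k + 1) powr t)
      = mobius_floor_weight n k - mobius_floor_weight n (k + 1)" if "k \<in> {2..n - 1}" for k
    using that by (intro integral_unique has_integral_diff has_integral_F_t_div_powr) auto
  have series: "(\<Sum>j. S_fun a (real (j + 2)) * of_real (integral {\<sigma>..}
      (\<lambda>u. (1 / real (j + 2) powr u - 1 / real (j + 3) powr u) / zeta_real u))) = g_fun a \<sigma> - a 1"
    using sums_S_fun_integral_zeta[OF hS \<open>1 < \<sigma>\<close>] by (rule sums_unique[symmetric])
  have integrals: "(\<Sum>k\<in>{2..n - 1}. S_fun a (real k) *
      of_real (integral {0..} (\<lambda>t. F_t t (real n / real k) / real k powr t
                                  - F_t t (real n / real (k + 1)) / real (k + 1) powr t)))
      = (\<Sum>k\<in>{2..n - 1}. S_fun a (real k) * of_real (mobius_floor_weight n k - mobius_floor_weight n (k + 1)))"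
    by (intro sum.cong refl) (simp only: integral_eq)
  show ?thesis
    unfolding \<sigma>_def[symmetric] series integrals sum_times_div_eq_sum_S_fun[OF hn]
    by (simp add: algebra_simps)
qed

end
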